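(* For every integer $n$, $$F_n^3=\frac{F_{n-1}F_{n+1}F_{n+2}+F_{n-2}F_{n-1}F_{n+1}}{6}+\frac{F_{n-2}F_{n+1}F_{n+2}-F_{n-2}F_{n-1}F_{n+2}}{2}.$$
   Context: $F_n$ denotes the Fibonacci numbers: $F_0=0,F_1=1$, $F_{n+1}=F_n+F_{n-1}$ for all $n\in\mathbb{Z}$ (so $F_{-m}=(-1)^{m+1}F_m$). *)

theory Defs
  imports Complex_Main "HOL-Number_Theory.Fib"
begin

definition fibz :: "int \<Rightarrow> int" where
  "fibz n = (if n \<ge> 0 then int (fib (nat n))
             else (-1) ^ (nat (-n) + 1) * int (fib (nat (-n))))"

end

theory Submission
  imports Defs
begin

text \<open>Writing $a = F_{n-2}$ and $b = F_{n-1}$, the recurrence expresses $F_n$, $F_{n+1}$, $F_{n+2}$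
  as $a+b$, $a+2b$, $2a+3b$, and both sides become the same cubic form in $a$ and $b$. So the
  identity holds for every integer sequence satisfying the Fibonacci recurrence; the only work
  is to check that the extension of $F$ to negative indices satisfies it.\<close>

lemma fibz_of_nat: "fibz (int m) = int (fib m)"
  by (simp add: fibz_def)

lemma fibz_neg_Suc: "fibz (- int (Suc m)) = (-1) ^ m * int (fib (Suc m))"
  by (simp add: fibz_def nat_add_distrib)

lemma fibz_add_two: "fibz (n + 2) = fibz (n + 1) + fibz n"
proof (cases "n \<ge> -1")
  case True
  define k where "k = nat (n + 1)"
  with True have k: "n + 1 = int k" by simp
  show ?thesis
  proof (cases k)
    case 0
    with k have "n = -1" by simp
    then show ?thesis by (simp add: fibz_def)
  next
    case (Suc j)
    with k have "n = int j" "n + 2 = int (Suc (Suc j))" by simp_all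
    with k Suc show ?thesis by (simp only: fibz_of_nat) simp
  qed
next
  case False
  define m where "m = nat (- (n + 2))"
  with False have m: "n + 2 = - int m" by simp
  show ?thesis
  proof (cases m)
    case 0
    with m have "n = -2" by simp
    then show ?thesis by (simp add: fibz_def)
  next
    case (Suc k)
    with m have "n + 1 = - int (Suc m)" "n = - int (Suc (Suc m))" by simp_all
    with m Suc show ?thesis by (simp only: fibz_neg_Suc) (simp add: algebra_simps)
  qed
qed

lemma cube_identity_of_fibonacci_recurrence:
  fixes f :: "int \<Rightarrow> int"
  assumes rec: "\<And>k. f (k + 2) = f (k + 1) + f k"
  shows "(real_of_int (f n)) ^ 3 =
    real_of_int (f (n-1) * f (n+1) * f (n+2) + f (n-2) * f (n-1) * f (n+1)) / 6
  + real_of_int (f (n-2) * f (n+1) * f (n+2) - f (n-2) * f (n-1) * f (n+2)) / 2"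
proof -
  define a b where a: "a = f (n - 2)" and b: "b = f (n - 1)"
  have c: "f n = a + b"
    using rec[of "n - 2"] by (simp add: a b add.commute)
  have d: "f (n + 1) = a + 2 * b"
    using rec[of "n - 1"] c by (simp add: a b add.commute)
  have e: "f (n + 2) = 2 * a + 3 * b"
    using rec[of n] c d by simp
  show ?thesis
    unfolding c d e a[symmetric] b[symmetric] by (simp add: field_simps power3_eq_cube)
qed

theorem proposition2p5:
  fixes n :: int
  shows "(real_of_int (fibz n)) ^ 3 =
    real_of_int (fibz (n-1) * fibz (n+1) * fibz (n+2) + fibz (n-2) * fibz (n-1) * fibz (n+1)) / 6
  + real_of_int (fibz (n-2) * fibz (n+1) * fibz (n+2) - fibz (n-2) * fibz (n-1) * fibz (n+2)) / 2"
  using fibz_add_two by (rule cube_identity_of_fibonacci_recurrence)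

end
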